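(* Let $X$ be a compact metrizable abelian group, $T$ a continuous automorphism of $X$, and $Y$ a closed subgroup with $TY=Y$. Let $\mathcal{P}\subseteq\mathbb{N}$ have bounded gaps. If both $(Y,T)$ and $(X/Y,T)$ satisfy partial specification with periods $\mathcal{P}$, then $(X,T)$ satisfies partial specification with periods $\mathcal{P}$.
   Context: Let $(Z,R)$ be a compact metrizable space with a homeomorphism, and fix a compatible metric $d_Z$ (the property below does not depend on this choice). For $M\in\mathbb{N}$, an $M$-spaced specification is $\xi=\{(z_i;a_i,b_i)\}_{i=1}^r$ with $z_i\in Z$ and integers $0\le a_1<b_1<\cdots<a_r<b_r$, $a_{i+1}-b_i\ge M$. For $\varepsilon>0$, $\xi$ is $\varepsilon$-partially traced by $w\in Z$ if for each $i$, $|\{a_i\le n<b_i: d_Z(R^nz_i,R^nw)<\varepsilon\}|>(1-\varepsilon)(b_i-a_i)$. $(Z,R)$ satisfies partial specification with periods $\mathcal{P}$ if for every $\varepsilon>0$ there exist $N,M\in\mathbb{N}$ such that for every $M$-spaced specification $\xi$ and every $n\in\mathcal{P}$ with $n\ge\max\{N,(1+\varepsilon)b_r\}$ there exists $w\in Z$ with $R^nw=w$ that $\varepsilon$-partially traces $\xi$. Here $T$ denotes also its restriction to $Y$ and the induced automorphism of $X/Y$. *)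

theory Defs
  imports "HOL-Analysis.Analysis"
begin

text \<open>Specifications are indexed
  0-based: points z i, intervals [a i, b i) for i < r, with r \<ge> 1.\<close>

definition spaced_spec ::
  "'a set \<Rightarrow> nat \<Rightarrow> nat \<Rightarrow> (nat \<Rightarrow> 'a) \<Rightarrow> (nat \<Rightarrow> nat) \<Rightarrow> (nat \<Rightarrow> nat) \<Rightarrow> bool" where
  "spaced_spec S M r z a b \<longleftrightarrow>
     r \<ge> 1 \<and> (\<forall>i<r. z i \<in> S \<and> a i < b i) \<and>
     (\<forall>i. Suc i < r \<longrightarrow> b i < a (Suc i) \<and> b i + M \<le> a (Suc i))"

definition partially_traces ::
  "('a \<Rightarrow> 'a) \<Rightarrow> ('a \<Rightarrow> 'a \<Rightarrow> real) \<Rightarrow> real \<Rightarrow> nat \<Rightarrow> (nat \<Rightarrow> 'a) \<Rightarrow> (nat \<Rightarrow> nat) \<Rightarrow> (nat \<Rightarrow> nat) \<Rightarrow> 'a \<Rightarrow> bool" where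
  "partially_traces R d \<epsilon> r z a b w \<longleftrightarrow>
     (\<forall>i<r. real (card {n \<in> {a i..<b i}. d ((R ^^ n) (z i)) ((R ^^ n) w) < \<epsilon>})
              > (1 - \<epsilon>) * real (b i - a i))"

definition partial_specification ::
  "'a set \<Rightarrow> ('a \<Rightarrow> 'a) \<Rightarrow> ('a \<Rightarrow> 'a \<Rightarrow> real) \<Rightarrow> nat set \<Rightarrow> bool" where
  "partial_specification S R d P \<longleftrightarrow>
     (\<forall>\<epsilon>>0. \<exists>N M::nat. \<forall>r z a b. spaced_spec S M r z a b \<longrightarrow>
        (\<forall>n\<in>P. n \<ge> N \<and> real n \<ge> (1 + \<epsilon>) * real (b (r - 1)) \<longrightarrow>
           (\<exists>w\<in>S. (R ^^ n) w = w \<and> partially_traces R d \<epsilon> r z a b w)))"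

definition bounded_gaps :: "nat set \<Rightarrow> bool" where
  "bounded_gaps P \<longleftrightarrow> (\<exists>K. \<forall>m. \<exists>p\<in>P. m \<le> p \<and> p < m + K)"

text \<open>Hausdorff distance (a compatible metric on the space of cosets of a compact subgroup).\<close>
definition hausdorff_dist :: "'a::metric_space set \<Rightarrow> 'a set \<Rightarrow> real" where
  "hausdorff_dist A B = max (SUP x\<in>A. infdist x B) (SUP y\<in>B. infdist y A)"

text \<open>The quotient X/Y as the set of cosets, with the induced automorphism acting by images.\<close>
definition cosets :: "'a::ab_group_add set \<Rightarrow> 'a set set" where
  "cosets Y = range (\<lambda>x. (\<lambda>y. x + y) ` Y)"

end

theory Submission
  imports Defs
begin

lemma funpow_image: "((\<lambda>C. f ` C) ^^ k) C = ((f :: 'a \<Rightarrow> 'a) ^^ k) ` C"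
  by (induction k) (simp_all add: image_image)

lemma funpow_image_invariant:
  assumes "(f :: 'a \<Rightarrow> 'a) ` Y = Y" shows "(f ^^ k) ` Y = Y"
proof (induction k)
  case (Suc k)
  have "(f ^^ Suc k) ` Y = f ` (f ^^ k) ` Y" by (simp add: image_comp)
  then show ?case using Suc assms by simp
qed simp

lemma continuous_on_funpow: "continuous_on UNIV (f :: 'a::topological_space \<Rightarrow> 'a) \<Longrightarrow> continuous_on UNIV (f ^^ k)"
  by (induction k) (auto intro: continuous_on_compose2[of UNIV f])

lemma additive_funpow: "Modules.additive (f :: 'a::ab_group_add \<Rightarrow> 'a) \<Longrightarrow> Modules.additive (f ^^ k)"
  by (induction k) (simp_all add: Modules.additive_def)

lemma uniformly_continuous_translation:
  fixes e :: real
  assumes "compact (UNIV :: 'x::{topological_ab_group_add, metric_space} set)" and "e > 0"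
  shows "\<exists>d>0. \<forall>u a b :: 'x. dist a b < d \<longrightarrow> dist (u + a) (u + b) < e"
proof -
  define add :: "'x \<times> 'x \<Rightarrow> 'x" where "add p = fst p + snd p" for p
  have "compact (UNIV \<times> UNIV :: ('x \<times> 'x) set)"
    by (rule compact_Times[OF assms(1) assms(1)])
  moreover have "continuous_on UNIV add"
    unfolding add_def by (intro continuous_on_add continuous_on_fst continuous_on_snd continuous_on_id)
  ultimately have uc: "uniformly_continuous_on UNIV add"
    by (simp add: compact_uniformly_continuous)
  obtain d where "d > 0" and d: "\<And>p p'. p \<in> UNIV \<Longrightarrow> p' \<in> UNIV \<Longrightarrow> dist p' p < d \<Longrightarrow> dist (add p') (add p) < e"
    using uniformly_continuous_onE[OF uc assms(2)] by metis
  have "dist (u + a) (u + b) < e" if "dist a b < d" for u a b :: 'x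
    using d[of "(u, b)" "(u, a)"] that by (simp add: add_def dist_Pair_Pair)
  with \<open>d > 0\<close> show ?thesis by blast
qed

lemma uniformly_equicontinuous_funpow:
  fixes f :: "'a::metric_space \<Rightarrow> 'a"
  assumes "compact (UNIV :: 'a set)" and "continuous_on UNIV f" and "e > 0"
  shows "\<exists>d>0. \<forall>x y. dist x y < d \<longrightarrow> (\<forall>k<l. dist ((f ^^ k) x) ((f ^^ k) y) < e)"
proof (induction l)
  case 0
  show ?case by (intro exI[of _ 1]) auto
next
  case (Suc l)
  then obtain d1 where "d1 > 0" and d1: "\<forall>x y. dist x y < d1 \<longrightarrow> (\<forall>k<l. dist ((f ^^ k) x) ((f ^^ k) y) < e)"
    by blast
  have uc: "uniformly_continuous_on UNIV (f ^^ l)"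
    using assms(1,2) by (intro compact_uniformly_continuous continuous_on_funpow)
  obtain d2 where "d2 > 0" and d2: "\<And>x y. x \<in> UNIV \<Longrightarrow> y \<in> UNIV \<Longrightarrow> dist y x < d2 \<Longrightarrow> dist ((f ^^ l) y) ((f ^^ l) x) < e"
    using uniformly_continuous_onE[OF uc assms(3)] by metis
  have "dist ((f ^^ k) x) ((f ^^ k) y) < e" if "dist x y < min d1 d2" and "k < Suc l" for x y k
    using d1 d2[of y x] that by (cases "k = l") auto
  then show ?case using \<open>d1 > 0\<close> \<open>d2 > 0\<close> by (intro exI[of _ "min d1 d2"]) auto
qed

lemma hausdorff_dist_less_imp_close:
  fixes A B :: "'a::metric_space set"
  assumes "bounded A" and "x \<in> A" and "B \<noteq> {}" and "hausdorff_dist A B < e"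
  shows "\<exists>y\<in>B. dist x y < e"
proof -
  obtain b where "b \<in> B" using assms(3) by blast
  obtain c D where cD: "\<And>y. y \<in> A \<Longrightarrow> dist c y \<le> D"
    using assms(1) unfolding bounded_def by blast
  have "infdist y B \<le> D + dist c b" if "y \<in> A" for y
    using infdist_le[OF \<open>b \<in> B\<close>, of y] dist_triangle3[of y b c] cD[OF that] by linarith
  then have "bdd_above ((\<lambda>y. infdist y B) ` A)" by (intro bdd_aboveI2)
  then have "infdist x B \<le> (SUP y\<in>A. infdist y B)" using assms(2) by (rule cSUP_upper2) simp
  also have "\<dots> \<le> hausdorff_dist A B" unfolding hausdorff_dist_def by simp
  finally have "(INF y\<in>B. dist x y) < e" using assms(3,4) by (simp add: infdist_notempty)
  then show ?thesis using assms(3) by (subst (asm) cINF_less_iff) (auto intro: bdd_belowI2[of _ 0])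
qed

lemma card_gt_iff_card_diff_less:
  assumes "finite U"
  shows "(1 - \<epsilon>) * real (card U) < real (card {x \<in> U. P x}) \<longleftrightarrow>
    real (card (U - {x \<in> U. P x})) < \<epsilon> * real (card U)"
proof -
  have "card {x \<in> U. P x} \<le> card U" using assms by (simp add: card_mono)
  then have "real (card (U - {x \<in> U. P x})) = real (card U) - real (card {x \<in> U. P x})"
    using assms by (simp add: card_Diff_subset)
  moreover have "(1 - \<epsilon>) * real (card U) = real (card U) - \<epsilon> * real (card U)"
    by (simp add: algebra_simps)
  ultimately show ?thesis by linarith
qed

lemma card_diff_less_by_cover:
  fixes U :: "'a set" and I Good :: "'q \<Rightarrow> 'a set"
  assumes "finite U" and "finite Q" and "disjoint_family_on I Q" and "\<And>q. q \<in> Q \<Longrightarrow> I q \<subseteq> U"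
    and G: "real (card (U - G)) < \<alpha> * real (card U)"
    and Good: "\<And>q. q \<in> Q \<Longrightarrow> real (card (I q - Good q)) \<le> \<eta> * real (card (I q))"
    and uncovered: "real (card (U - \<Union>(I ` Q))) \<le> \<beta> * real (card U)"
    and F: "\<And>q x. q \<in> Q \<Longrightarrow> x \<in> I q \<Longrightarrow> x \<in> G \<Longrightarrow> x \<in> Good q \<Longrightarrow> x \<in> F"
    and "0 \<le> \<eta>"
  shows "real (card (U - F)) < (\<alpha> + \<eta> + \<beta>) * real (card U)"
proof -
  have finI: "finite (I q)" if "q \<in> Q" for q
    using assms(1,4) that by (meson finite_subset)
  have "U - F \<subseteq> (U - G) \<union> (\<Union>q\<in>Q. I q - Good q) \<union> (U - \<Union>(I ` Q))"
    using F by blast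
  then have "card (U - F) \<le> card ((U - G) \<union> (\<Union>q\<in>Q. I q - Good q) \<union> (U - \<Union>(I ` Q)))"
    using assms(1,2) finI by (intro card_mono) auto
  also have "\<dots> \<le> card ((U - G) \<union> (\<Union>q\<in>Q. I q - Good q)) + card (U - \<Union>(I ` Q))"
    by (rule card_Un_le)
  also have "\<dots> \<le> card (U - G) + card (\<Union>q\<in>Q. I q - Good q) + card (U - \<Union>(I ` Q))"
    using card_Un_le by simp
  also have "\<dots> \<le> card (U - G) + (\<Sum>q\<in>Q. card (I q - Good q)) + card (U - \<Union>(I ` Q))"
    using card_UN_le[OF assms(2)] by simp
  finally have "real (card (U - F)) \<le>
      real (card (U - G)) + (\<Sum>q\<in>Q. real (card (I q - Good q))) + real (card (U - \<Union>(I ` Q)))"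
    by (metis of_nat_add of_nat_le_iff of_nat_sum)
  moreover have "(\<Sum>q\<in>Q. real (card (I q - Good q))) \<le> \<eta> * real (card U)"
  proof -
    have "(\<Sum>q\<in>Q. card (I q)) = card (\<Union>(I ` Q))"
      using assms(2,3) finI by (intro card_UN_disjoint[symmetric]) (auto simp: disjoint_family_on_def)
    also have "\<dots> \<le> card U"
      using assms(1,4) by (intro card_mono) auto
    finally have "(\<Sum>q\<in>Q. real (card (I q))) \<le> real (card U)"
      by (metis of_nat_le_iff of_nat_sum)
    have "(\<Sum>q\<in>Q. real (card (I q - Good q))) \<le> (\<Sum>q\<in>Q. \<eta> * real (card (I q)))"
      using Good by (rule sum_mono)
    also have "\<dots> = \<eta> * (\<Sum>q\<in>Q. real (card (I q)))"
      by (simp add: sum_distrib_left)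
    also have "\<dots> \<le> \<eta> * real (card U)"
      using \<open>(\<Sum>q\<in>Q. real (card (I q))) \<le> real (card U)\<close> \<open>0 \<le> \<eta>\<close> by (rule mult_left_mono)
    finally show ?thesis .
  qed
  moreover have "(\<alpha> + \<eta> + \<beta>) * real (card U) = \<alpha> * real (card U) + \<eta> * real (card U) + \<beta> * real (card U)"
    by (simp add: algebra_simps)
  ultimately show ?thesis using G uncovered by linarith
qed

definition block_start :: "nat \<Rightarrow> nat \<Rightarrow> nat \<Rightarrow> nat" where
  "block_start l a q = a + q * l"

definition block_end :: "nat \<Rightarrow> nat \<Rightarrow> nat \<Rightarrow> nat \<Rightarrow> nat \<Rightarrow> nat" where
  "block_end l g a b q = (if a + Suc q * l < b then a + Suc q * l - g else b)"

lemma block_bounds: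
  assumes "q * l < b - a" and "g < l"
  shows "a \<le> block_start l a q" and "block_start l a q < block_end l g a b q"
    and "block_end l g a b q \<le> b" and "block_end l g a b q \<le> block_start l a q + l"
  using assms by (auto simp: block_start_def block_end_def)

lemma block_end_gap:
  assumes "q < q'" and "q' * l < b - a" and "g < l"
  shows "block_end l g a b q + g \<le> block_start l a q'"
proof -
  have "Suc q * l \<le> q' * l" using assms(1) by (intro mult_le_mono1) simp
  then show ?thesis using assms(2,3) by (auto simp: block_start_def block_end_def)
qed

lemma card_outside_blocks:
  assumes "g < l"
  shows "real (card ({a..<b} - (\<Union>q\<in>{q. q * l < b - a}. {block_start l a q..<block_end l g a b q})))
    \<le> real g / real l * real (b - a)"
proof -
  define Q where "Q = {q. a + Suc q * l < b}"
  have "finite Q"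
  proof (rule finite_subset)
    show "Q \<subseteq> {..<b}"
    proof
      fix q assume "q \<in> Q"
      then have "q * l < b" by (simp add: Q_def)
      moreover have "q \<le> q * l" using assms by simp
      ultimately show "q \<in> {..<b}" by (meson le_less_trans lessThan_iff)
    qed
  qed simp
  have "{a..<b} - (\<Union>q\<in>{q. q * l < b - a}. {block_start l a q..<block_end l g a b q})
      \<subseteq> (\<Union>q\<in>Q. {a + Suc q * l - g..<a + Suc q * l})"
  proof
    fix j assume j: "j \<in> {a..<b} - (\<Union>q\<in>{q. q * l < b - a}. {block_start l a q..<block_end l g a b q})"
    define q where "q = (j - a) div l"
    have "q * l \<le> j - a" by (simp add: q_def)
    moreover have "j - a < Suc q * l"
      using assms dividend_less_div_times[of l "j - a"] by (simp add: q_def)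
    moreover have "a \<le> j" and "j < b" using j by auto
    ultimately have "q * l < b - a" and "block_start l a q \<le> j"
      unfolding block_start_def by linarith+
    then have "j \<notin> {block_start l a q..<block_end l g a b q}" using j by blast
    then have "block_end l g a b q \<le> j" using \<open>block_start l a q \<le> j\<close> by simp
    then have "a + Suc q * l < b" and "a + Suc q * l - g \<le> j"
      using j by (simp_all add: block_end_def split: if_splits)
    moreover have "j < a + Suc q * l" using \<open>j - a < Suc q * l\<close> by simp
    ultimately show "j \<in> (\<Union>q\<in>Q. {a + Suc q * l - g..<a + Suc q * l})"
      by (intro UN_I[of q]) (simp_all add: Q_def)
  qed
  then have "card ({a..<b} - (\<Union>q\<in>{q. q * l < b - a}. {block_start l a q..<block_end l g a b q}))
      \<le> card (\<Union>q\<in>Q. {a + Suc q * l - g..<a + Suc q * l})"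
    using \<open>finite Q\<close> by (intro card_mono) auto
  also have "\<dots> \<le> (\<Sum>q\<in>Q. card {a + Suc q * l - g..<a + Suc q * l})"
    using \<open>finite Q\<close> by (rule card_UN_le)
  also have "\<dots> = card Q * g"
  proof -
    have "card {a + Suc q * l - g..<a + Suc q * l} = g" for q
      using assms by (simp add: le_trans[OF less_imp_le[OF assms]])
    then show ?thesis by simp
  qed
  also have "\<dots> \<le> (b - a) div l * g"
  proof -
    have "Suc q \<le> (b - a) div l" if "q \<in> Q" for q
      using that assms by (simp add: Q_def less_eq_div_iff_mult_less_eq)
    then have "Q \<subseteq> {..<(b - a) div l}" by (simp add: Suc_le_eq subset_eq)
    then show ?thesis by (intro mult_le_mono1) (metis card_lessThan card_mono finite_lessThan)
  qed
  finally have "real (card ({a..<b} - (\<Union>q\<in>{q. q * l < b - a}. {block_start l a q..<block_end l g a b q})))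
      \<le> real ((b - a) div l) * real g"
    by (metis of_nat_le_iff of_nat_mult)
  also have "\<dots> \<le> real g / real l * real (b - a)"
  proof -
    have "real ((b - a) div l) * real l \<le> real (b - a)"
      by (metis div_times_less_eq_dividend of_nat_le_iff of_nat_mult)
    then have "real ((b - a) div l) \<le> real (b - a) / real l"
      using assms by (simp add: pos_le_divide_eq)
    then have "real ((b - a) div l) * real g \<le> real (b - a) / real l * real g"
      by (rule mult_right_mono) simp
    then show ?thesis by (simp add: mult.commute)
  qed
  finally show ?thesis .
qed

lemma card_in_blocks_gt:
  assumes "a < b" and "g < l" and "real g \<le> \<epsilon> / 3 * real l"
    and "\<alpha> \<le> \<epsilon> / 3" and "0 \<le> \<eta>" and "\<eta> \<le> \<epsilon> / 3"
    and G: "(1 - \<alpha>) * real (b - a) < real (card {j \<in> {a..<b}. G j})"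
    and Good: "\<And>q. q * l < b - a \<Longrightarrow> (1 - \<eta>) * real (block_end l g a b q - block_start l a q)
        < real (card {j \<in> {block_start l a q..<block_end l g a b q}. Good q j})"
    and F: "\<And>q j. q * l < b - a \<Longrightarrow> j \<in> {block_start l a q..<block_end l g a b q} \<Longrightarrow> G j \<Longrightarrow> Good q j \<Longrightarrow> F j"
  shows "(1 - \<epsilon>) * real (b - a) < real (card {j \<in> {a..<b}. F j})"
proof -
  define Q where "Q = {q. q * l < b - a}"
  define I where "I q = {block_start l a q..<block_end l g a b q}" for q
  have "finite Q"
  proof (rule finite_subset)
    show "Q \<subseteq> {..<b - a}"
    proof
      fix q assume "q \<in> Q"
      then have "q * l < b - a" by (simp add: Q_def)
      moreover have "q \<le> q * l" using assms(2) by simp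
      ultimately show "q \<in> {..<b - a}" by (meson le_less_trans lessThan_iff)
    qed
  qed simp
  have disjoint: "I q \<inter> I q' = {}" if "q \<in> Q" and "q' \<in> Q" and "q < q'" for q q'
  proof -
    have "block_end l g a b q + g \<le> block_start l a q'"
      using block_end_gap[OF that(3) _ assms(2)] that(2) by (simp add: Q_def)
    then show ?thesis by (auto simp: I_def)
  qed
  have "real (card ({a..<b} - {j \<in> {a..<b}. F j})) < (\<alpha> + \<eta> + real g / real l) * real (card {a..<b})"
  proof (rule card_diff_less_by_cover[where I = I and Good = "\<lambda>q. {j \<in> I q. Good q j}"])
    show "finite {a..<b}" by simp
    show "finite Q" by fact
    show "disjoint_family_on I Q"
      unfolding disjoint_family_on_def using disjoint by (metis inf_commute linorder_neqE_nat)
    show "I q \<subseteq> {a..<b}" if "q \<in> Q" for q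
      using block_bounds[of q l b a g] that assms(2) by (auto simp: I_def Q_def)
    show "real (card ({a..<b} - {j \<in> {a..<b}. G j})) < \<alpha> * real (card {a..<b})"
      using G by (intro card_gt_iff_card_diff_less[THEN iffD1]) simp_all
    show "real (card (I q - {j \<in> I q. Good q j})) \<le> \<eta> * real (card (I q))" if "q \<in> Q" for q
      using Good[of q] that
      by (intro less_imp_le card_gt_iff_card_diff_less[THEN iffD1]) (simp_all add: I_def Q_def)
    show "real (card ({a..<b} - \<Union>(I ` Q))) \<le> real g / real l * real (card {a..<b})"
      using card_outside_blocks[OF assms(2), of a b] by (simp add: I_def Q_def)
    show "x \<in> {j \<in> {a..<b}. F j}"
      if "q \<in> Q" and "x \<in> I q" and "x \<in> {j \<in> {a..<b}. G j}" and "x \<in> {j \<in> I q. Good q j}" for q x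
      using F[of q x] that by (simp add: I_def Q_def)
    show "0 \<le> \<eta>" by fact
  qed
  also have "\<dots> \<le> \<epsilon> * real (card {a..<b})"
  proof -
    have "real g / real l \<le> \<epsilon> / 3" using assms(2,3) by (simp add: divide_le_eq)
    then have "\<alpha> + \<eta> + real g / real l \<le> \<epsilon>" using assms(4,6) by linarith
    then show ?thesis by (intro mult_right_mono) auto
  qed
  finally have "(1 - \<epsilon>) * real (card {a..<b}) < real (card {j \<in> {a..<b}. F j})"
    by (rule card_gt_iff_card_diff_less[THEN iffD2, OF finite_atLeastLessThan])
  then show ?thesis by simp
qed

definition traces_segment ::
  "('a \<Rightarrow> 'a) \<Rightarrow> ('a \<Rightarrow> 'a \<Rightarrow> real) \<Rightarrow> real \<Rightarrow> 'a \<Rightarrow> nat \<Rightarrow> nat \<Rightarrow> 'a \<Rightarrow> bool" where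
  "traces_segment R d \<epsilon> z a b w \<longleftrightarrow>
     (1 - \<epsilon>) * real (b - a) < real (card {n \<in> {a..<b}. d ((R ^^ n) z) ((R ^^ n) w) < \<epsilon>})"

lemma partially_traces_iff:
  "partially_traces R d \<epsilon> r z a b w \<longleftrightarrow> (\<forall>i<r. traces_segment R d \<epsilon> (z i) (a i) (b i) w)"
  by (simp add: partially_traces_def traces_segment_def)

lemma traces_segment_single_time:
  assumes "traces_segment R d \<epsilon> z a (Suc a) w" and "\<epsilon> \<le> 1"
  shows "d ((R ^^ a) z) ((R ^^ a) w) < \<epsilon>"
proof (rule ccontr)
  assume "\<not> ?thesis"
  then have "{n \<in> {a..<Suc a}. d ((R ^^ n) z) ((R ^^ n) w) < \<epsilon>} = {}" by auto
  with assms(1) have "(1 - \<epsilon>) * real (Suc a - a) < 0"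
    unfolding traces_segment_def by (metis card.empty of_nat_0)
  with assms(2) show False by simp
qed

definition periodic_tracing ::
  "'a set \<Rightarrow> ('a \<Rightarrow> 'a) \<Rightarrow> ('a \<Rightarrow> 'a \<Rightarrow> real) \<Rightarrow> nat set \<Rightarrow> real \<Rightarrow> nat \<Rightarrow> nat \<Rightarrow> bool" where
  "periodic_tracing S R d P \<epsilon> N M \<longleftrightarrow>
     (\<forall>r z a b. spaced_spec S M r z a b \<longrightarrow>
        (\<forall>n\<in>P. n \<ge> N \<and> real n \<ge> (1 + \<epsilon>) * real (b (r - 1)) \<longrightarrow>
           (\<exists>w\<in>S. (R ^^ n) w = w \<and> partially_traces R d \<epsilon> r z a b w)))"

lemma partial_specification_iff_periodic_tracing:
  "partial_specification S R d P \<longleftrightarrow> (\<forall>\<epsilon>>0. \<exists>N M. periodic_tracing S R d P \<epsilon> N M)"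
  by (simp add: partial_specification_def periodic_tracing_def)

lemma periodic_tracingD:
  assumes "periodic_tracing S R d P \<epsilon> N M" and "spaced_spec S M r z a b"
    and "n \<in> P" and "N \<le> n" and "(1 + \<epsilon>) * real (b (r - 1)) \<le> real n"
  shows "\<exists>w\<in>S. (R ^^ n) w = w \<and> partially_traces R d \<epsilon> r z a b w"
  using assms unfolding periodic_tracing_def by blast

lemma spaced_spec_chain:
  assumes "spaced_spec S M r z a b" and "i < i'" and "i' < r"
  shows "b i < a i' \<and> b i + M \<le> a i'"
  using assms(2,3)
proof (induction i' rule: less_induct)
  case (less i')
  then obtain k where k: "i' = Suc k" by (cases i') auto
  have step: "b k < a i' \<and> b k + M \<le> a i'"
    using assms(1) less.prems k unfolding spaced_spec_def by auto
  show ?case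
  proof (cases "i = k")
    case False
    then have "b i < a k \<and> b i + M \<le> a k" using less k by auto
    moreover have "a k < b k" using assms(1) less.prems k unfolding spaced_spec_def by auto
    ultimately show ?thesis using step by auto
  qed (use step in simp)
qed

lemma spaced_spec_end_le_last:
  assumes "spaced_spec S M r z a b" and "i < r"
  shows "b i \<le> b (r - 1)"
proof (cases "i = r - 1")
  case False
  then have "b i < a (r - 1)" using spaced_spec_chain[OF assms(1), of i "r - 1"] assms(2) by simp
  moreover have "a (r - 1) < b (r - 1)" using assms unfolding spaced_spec_def by simp
  ultimately show ?thesis by simp
qed simp

lemma spaced_spec_mono:
  assumes "spaced_spec S M r z a b" and "M' \<le> M" and "\<And>i. i < r \<Longrightarrow> z' i \<in> S'"
  shows "spaced_spec S' M' r z' a b"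
proof -
  have "b i < a (Suc i) \<and> b i + M' \<le> a (Suc i)" if "Suc i < r" for i
    using assms(1,2) that unfolding spaced_spec_def by fastforce
  then show ?thesis using assms(1,3) unfolding spaced_spec_def by blast
qed

lemma spaced_spec_block_gap:
  assumes "spaced_spec S M r x a b" and "g \<le> M" and "g < l"
    and "i' < r" and "q' * l < b i' - a i'" and "q * l < b i - a i"
    and "i < i' \<or> (i = i' \<and> q < q')"
  shows "block_end l g (a i) (b i) q + g \<le> block_start l (a i') q'"
proof (cases "i < i'")
  case True
  have "block_end l g (a i) (b i) q \<le> b i" using block_bounds(3)[OF assms(6,3)] .
  moreover have "b i + M \<le> a i'" using spaced_spec_chain[OF assms(1) True assms(4)] by simp
  moreover have "a i' \<le> block_start l (a i') q'" by (simp add: block_start_def)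
  ultimately show ?thesis using assms(2) by linarith
next
  case False
  then have "i = i'" and "q < q'" using assms(7) by auto
  then show ?thesis using block_end_gap[OF \<open>q < q'\<close> _ assms(3)] assms(5) by simp
qed

lemma spaced_spec_blocks_separated:
  assumes "spaced_spec S g r x a b" and "g < l" and "i < r" and "i' < r"
    and "q * l < b i - a i" and "q' * l < b i' - a i'" and "(i, q) \<noteq> (i', q')"
  shows "block_end l g (a i) (b i) q + g \<le> block_start l (a i') q' \<or>
    block_end l g (a i') (b i') q' + g \<le> block_start l (a i) q"
proof -
  consider "i < i' \<or> (i = i' \<and> q < q')" | "i' < i \<or> (i' = i \<and> q' < q)"
    using assms(7) by (metis linorder_neqE_nat)
  then show ?thesis
  proof cases
    case 1
    from spaced_spec_block_gap[OF assms(1) order.refl assms(2,4,6,5) 1] show ?thesis ..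
  next
    case 2
    from spaced_spec_block_gap[OF assms(1) order.refl assms(2,3,5,6) 2] show ?thesis ..
  qed
qed

lemma periodic_tracing_family:
  fixes J :: "'j set" and z :: "'j \<Rightarrow> 'a" and s e :: "'j \<Rightarrow> nat"
  assumes tracing: "periodic_tracing S R d P \<epsilon> N M" and "0 \<le> \<epsilon>"
    and "finite J" and "J \<noteq> {}"
    and pts: "\<And>j. j \<in> J \<Longrightarrow> z j \<in> S \<and> s j < e j \<and> e j \<le> B"
    and sep: "\<And>j j'. j \<in> J \<Longrightarrow> j' \<in> J \<Longrightarrow> j \<noteq> j' \<Longrightarrow> e j + M < s j' \<or> e j' + M < s j"
    and n: "n \<in> P" "N \<le> n" "(1 + \<epsilon>) * real B \<le> real n"
  shows "\<exists>w\<in>S. (R ^^ n) w = w \<and> (\<forall>j\<in>J. traces_segment R d \<epsilon> (z j) (s j) (e j) w)"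
proof -
  have sep_ordered: "e j + M < s j'" if "j \<in> J" "j' \<in> J" "s j < s j'" for j j'
    using sep[OF that(1,2)] pts[OF that(1)] pts[OF that(2)] that(3) by auto
  have inj: "inj_on s J"
  proof (rule inj_onI)
    fix j j' assume "j \<in> J" "j' \<in> J" "s j = s j'"
    then show "j = j'" using sep[of j j'] pts[of j] pts[of j'] by auto
  qed
  define L where "L = sorted_list_of_set (s ` J)"
  define r where "r = length L"
  define idx where "idx k = inv_into J s (L ! k)" for k
  have setL: "set L = s ` J" and sorted: "sorted_wrt (<) L"
    using \<open>finite J\<close> by (simp_all add: L_def)
  have "r \<ge> 1" using \<open>J \<noteq> {}\<close> setL r_def by (cases L) auto
  have idx: "idx k \<in> J" "s (idx k) = L ! k" if "k < r" for k
    using that setL r_def idx_def by (metis inv_into_into nth_mem, metis f_inv_into_f nth_mem)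
  have spec: "spaced_spec S M r (z \<circ> idx) (s \<circ> idx) (e \<circ> idx)"
  proof -
    have "e (idx k) < s (idx (Suc k)) \<and> e (idx k) + M \<le> s (idx (Suc k))" if "Suc k < r" for k
    proof -
      have "L ! k < L ! Suc k" using sorted that r_def by (simp add: sorted_wrt_nth_less)
      then have "s (idx k) < s (idx (Suc k))" using idx(2)[of k] idx(2)[of "Suc k"] that by simp
      then have "e (idx k) + M < s (idx (Suc k))"
        using sep_ordered idx(1)[of k] idx(1)[of "Suc k"] that by (meson Suc_lessD)
      then show ?thesis by linarith
    qed
    moreover have "\<forall>k<r. z (idx k) \<in> S \<and> s (idx k) < e (idx k)" using pts idx(1) by blast
    ultimately show ?thesis using \<open>r \<ge> 1\<close> unfolding spaced_spec_def by auto
  qed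
  have bound: "(1 + \<epsilon>) * real ((e \<circ> idx) (r - 1)) \<le> real n"
  proof -
    have "e (idx (r - 1)) \<le> B" using pts idx(1) \<open>r \<ge> 1\<close> by simp
    then have "(1 + \<epsilon>) * real (e (idx (r - 1))) \<le> (1 + \<epsilon>) * real B"
      using \<open>0 \<le> \<epsilon>\<close> by (intro mult_left_mono) auto
    then show ?thesis using n(3) by simp
  qed
  obtain w where w: "w \<in> S" "(R ^^ n) w = w"
    and "partially_traces R d \<epsilon> r (z \<circ> idx) (s \<circ> idx) (e \<circ> idx) w"
    using periodic_tracingD[OF tracing spec n(1,2) bound] by blast
  then have traced: "\<And>k. k < r \<Longrightarrow> traces_segment R d \<epsilon> (z (idx k)) (s (idx k)) (e (idx k)) w"
    by (simp add: partially_traces_iff)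
  have "traces_segment R d \<epsilon> (z j) (s j) (e j) w" if "j \<in> J" for j
  proof -
    have "s j \<in> set L" using that setL by blast
    then obtain k where "k < r" "L ! k = s j" unfolding r_def by (metis in_set_conv_nth)
    then have "idx k = j" using that inj idx_def by (simp add: inv_into_f_f)
    then show ?thesis using traced \<open>k < r\<close> by blast
  qed
  then show ?thesis using w by blast
qed

locale invariant_subgroup =
  fixes T :: "'x::{topological_ab_group_add, metric_space} \<Rightarrow> 'x" and Y :: "'x set"
  assumes compact_UNIV: "compact (UNIV :: 'x set)"
    and additive_T: "Modules.additive T"
    and continuous_T: "continuous_on UNIV T"
    and closed_Y: "closed Y"
    and zero_in_Y: "0 \<in> Y"
    and diff_in_Y: "\<And>x y. x \<in> Y \<Longrightarrow> y \<in> Y \<Longrightarrow> x - y \<in> Y"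
    and image_T_Y: "T ` Y = Y"
begin

lemma uminus_in_Y: "y \<in> Y \<Longrightarrow> - y \<in> Y"
  using diff_in_Y[OF zero_in_Y, of y] by simp

lemma add_in_Y: "x \<in> Y \<Longrightarrow> y \<in> Y \<Longrightarrow> x + y \<in> Y"
  using diff_in_Y[of x "- y"] uminus_in_Y[of y] by simp

lemma sum_in_Y: "(\<And>i. i \<in> A \<Longrightarrow> f i \<in> Y) \<Longrightarrow> sum f A \<in> Y"
  by (induction A rule: infinite_finite_induct) (simp_all add: zero_in_Y add_in_Y)

lemma iter_add: "(T ^^ k) (x + y) = (T ^^ k) x + (T ^^ k) y"
  using additive_funpow[OF additive_T] by (rule additive.add)

lemma iter_zero: "(T ^^ k) 0 = 0"
  using additive_funpow[OF additive_T] by (rule additive.zero)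

lemma iter_diff: "(T ^^ k) (x - y) = (T ^^ k) x - (T ^^ k) y"
  using additive_funpow[OF additive_T] by (rule additive.diff)

lemma iter_image_Y: "(T ^^ k) ` Y = Y"
  using image_T_Y by (rule funpow_image_invariant)

lemma iter_in_Y: "y \<in> Y \<Longrightarrow> (T ^^ k) y \<in> Y"
  using iter_image_Y by blast

lemma iter_coset: "(T ^^ k) ` ((+) x ` Y) = (+) ((T ^^ k) x) ` Y"
proof -
  have "(T ^^ k) ` ((+) x ` Y) = (+) ((T ^^ k) x) ` (T ^^ k) ` Y"
    by (simp add: image_image iter_add)
  then show ?thesis by (simp add: iter_image_Y)
qed

lemma coset_shift: "y \<in> Y \<Longrightarrow> (+) (u + y) ` Y = (+) u ` Y"
proof
  assume "y \<in> Y"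
  show "(+) (u + y) ` Y \<subseteq> (+) u ` Y"
  proof
    fix p assume "p \<in> (+) (u + y) ` Y"
    then obtain y' where "y' \<in> Y" and "p = u + (y + y')" by (auto simp: add.assoc)
    then show "p \<in> (+) u ` Y" using add_in_Y[OF \<open>y \<in> Y\<close>] by (intro image_eqI[of _ _ "y + y'"]) simp_all
  qed
  show "(+) u ` Y \<subseteq> (+) (u + y) ` Y"
  proof
    fix p assume "p \<in> (+) u ` Y"
    then obtain y' where "y' \<in> Y" and "p = (u + y) + (y' - y)" by auto
    then show "p \<in> (+) (u + y) ` Y" using diff_in_Y[OF \<open>y' \<in> Y\<close> \<open>y \<in> Y\<close>] by (intro image_eqI[of _ _ "y' - y"]) simp_all
  qed
qed

lemma coset_hausdorff_close:
  assumes "hausdorff_dist ((+) x ` Y) ((+) u ` Y) < e"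
  shows "\<exists>y\<in>Y. dist x (u + y) < e"
proof -
  have "bounded ((+) x ` Y)"
    using compact_imp_bounded[OF compact_UNIV] by (rule bounded_subset) simp
  moreover have "x \<in> (+) x ` Y" using zero_in_Y by (intro image_eqI[of _ _ 0]) simp_all
  moreover have "(+) u ` Y \<noteq> {}" using zero_in_Y by blast
  ultimately have "\<exists>p\<in>(+) u ` Y. dist x p < e"
    using assms by (rule hausdorff_dist_less_imp_close)
  then obtain p where "p \<in> (+) u ` Y" and "dist x p < e" ..
  then show ?thesis by auto
qed

lemma orbit_stability:
  assumes "\<epsilon> > 0"
  obtains \<rho> where "\<rho> > 0"
    and "\<And>l. \<exists>\<eta>>0. \<forall>x u z v j0 j. j0 \<le> j \<longrightarrow> j < j0 + l \<longrightarrow>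
      dist ((T ^^ j0) x) ((T ^^ j0) u + (T ^^ j0) z) < \<eta> \<longrightarrow>
      dist ((T ^^ j) z) ((T ^^ j) v) < \<rho> \<longrightarrow> dist ((T ^^ j) x) ((T ^^ j) (u + v)) < \<epsilon>"
proof -
  obtain \<rho> where "\<rho> > 0" and \<rho>: "\<And>u a b :: 'x. dist a b < \<rho> \<Longrightarrow> dist (u + a) (u + b) < \<epsilon>"
    using uniformly_continuous_translation[OF compact_UNIV assms] by blast
  have "\<exists>\<eta>>0. \<forall>x u z v j0 j. j0 \<le> j \<longrightarrow> j < j0 + l \<longrightarrow>
      dist ((T ^^ j0) x) ((T ^^ j0) u + (T ^^ j0) z) < \<eta> \<longrightarrow>
      dist ((T ^^ j) z) ((T ^^ j) v) < \<rho> / 2 \<longrightarrow> dist ((T ^^ j) x) ((T ^^ j) (u + v)) < \<epsilon>" for l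
  proof -
    obtain \<delta> where "\<delta> > 0"
      and \<delta>: "\<forall>p q. dist p q < \<delta> \<longrightarrow> (\<forall>k<l. dist ((T ^^ k) p) ((T ^^ k) q) < \<rho> / 2)"
      using uniformly_equicontinuous_funpow[OF compact_UNIV continuous_T, of "\<rho> / 2" l] \<open>\<rho> > 0\<close> by auto
    obtain \<sigma> where "\<sigma> > 0" and \<sigma>: "\<And>u a b :: 'x. dist a b < \<sigma> \<Longrightarrow> dist (u + a) (u + b) < \<delta>"
      using uniformly_continuous_translation[OF compact_UNIV \<open>\<delta> > 0\<close>] by blast
    have "dist ((T ^^ j) x) ((T ^^ j) (u + v)) < \<epsilon>"
      if "j0 \<le> j" and "j < j0 + l" and close: "dist ((T ^^ j0) x) ((T ^^ j0) u + (T ^^ j0) z) < \<sigma>"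
        and traced: "dist ((T ^^ j) z) ((T ^^ j) v) < \<rho> / 2" for x u z v j0 j
    proof -
      define k where "k = j - j0"
      have "k < l" and "j = k + j0" using that(1,2) by (simp_all add: k_def)
      then have shift: "(T ^^ j) y = (T ^^ k) ((T ^^ j0) y)" for y by (simp add: funpow_add)
      have "dist (- (T ^^ j0) u + (T ^^ j0) x) (- (T ^^ j0) u + ((T ^^ j0) u + (T ^^ j0) z)) < \<delta>"
        using close by (rule \<sigma>)
      then have "dist ((T ^^ j0) (x - u)) ((T ^^ j0) z) < \<delta>" by (simp add: iter_diff)
      then have "dist ((T ^^ j) (x - u)) ((T ^^ j) z) < \<rho> / 2"
        using \<delta> \<open>k < l\<close> by (simp add: shift)
      then have "dist ((T ^^ j) x - (T ^^ j) u) ((T ^^ j) v) < \<rho>"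
        using traced dist_triangle[of "(T ^^ j) (x - u)" "(T ^^ j) v" "(T ^^ j) z"] by (simp add: iter_diff)
      then have "dist ((T ^^ j) u + ((T ^^ j) x - (T ^^ j) u)) ((T ^^ j) u + (T ^^ j) v) < \<epsilon>"
        by (rule \<rho>)
      then show ?thesis by (simp add: iter_add)
    qed
    then show ?thesis using \<open>\<sigma> > 0\<close> by blast
  qed
  moreover have "\<rho> / 2 > 0" using \<open>\<rho> > 0\<close> by simp
  ultimately show ?thesis using that by blast
qed

lemma iter_mult_sub_coboundary:
  assumes "w \<in> Y"
  shows "\<exists>v\<in>Y. (T ^^ (t * n)) w - w = (T ^^ n) v - v"
proof -
  have "(T ^^ (t * n)) w - w = (T ^^ n) (\<Sum>s<t. (T ^^ (s * n)) w) - (\<Sum>s<t. (T ^^ (s * n)) w)"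
  proof (induction t)
    case (Suc t)
    let ?A = "\<Sum>s<t. (T ^^ (s * n)) w" and ?w = "(T ^^ (t * n)) w"
    have "(T ^^ n) (\<Sum>s<Suc t. (T ^^ (s * n)) w) - (\<Sum>s<Suc t. (T ^^ (s * n)) w)
        = ((T ^^ n) ?A - ?A) + ((T ^^ n) ?w - ?w)"
      by (simp add: iter_add algebra_simps)
    also have "(T ^^ n) ?w = (T ^^ (Suc t * n)) w" by (simp add: funpow_add)
    also have "(T ^^ n) ?A - ?A = ?w - w" by (rule Suc.IH[symmetric])
    finally show ?case by simp
  qed (simp add: iter_zero)
  moreover have "(\<Sum>s<t. (T ^^ (s * n)) w) \<in> Y" using assms by (intro sum_in_Y iter_in_Y)
  ultimately show ?thesis by blast
qed

lemma block_anchor: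
  fixes K :: "nat set"
  assumes "\<And>j. j \<in> K \<Longrightarrow> G j \<Longrightarrow> \<exists>y\<in>Y. dist ((T ^^ j) x) ((T ^^ j) u + y) < e"
  shows "\<exists>z\<in>Y. \<exists>j0. \<forall>j\<in>K. G j \<longrightarrow>
    j0 \<le> j \<and> j0 \<in> K \<and> dist ((T ^^ j0) x) ((T ^^ j0) u + (T ^^ j0) z) < e"
proof (cases "\<exists>j\<in>K. G j")
  case False
  then show ?thesis using zero_in_Y by blast
next
  case True
  define j0 where "j0 = (LEAST j. j \<in> K \<and> G j)"
  have "j0 \<in> K \<and> G j0" using True unfolding j0_def by (metis (mono_tags, lifting) LeastI)
  have least: "j0 \<le> j" if "j \<in> K" and "G j" for j using that unfolding j0_def by (simp add: Least_le)
  obtain y where "y \<in> Y" and y: "dist ((T ^^ j0) x) ((T ^^ j0) u + y) < e"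
    using assms \<open>j0 \<in> K \<and> G j0\<close> by blast
  obtain z where "z \<in> Y" and "(T ^^ j0) z = y" using \<open>y \<in> Y\<close> iter_image_Y by (metis imageE)
  then have "\<forall>j\<in>K. G j \<longrightarrow> j0 \<le> j \<and> j0 \<in> K \<and> dist ((T ^^ j0) x) ((T ^^ j0) u + (T ^^ j0) z) < e"
    using least \<open>j0 \<in> K \<and> G j0\<close> y by simp
  then show ?thesis using \<open>z \<in> Y\<close> by blast
qed

lemma coboundary_approx:
  assumes spec: "partial_specification Y T dist P" and unbounded: "\<And>m. \<exists>p\<in>P. m \<le> p"
    and "1 \<le> n" and "c \<in> Y" and "\<delta> > 0"
  shows "\<exists>v\<in>Y. dist ((T ^^ n) v - v) c < \<delta>"
proof -
  obtain d1 where "d1 > 0" and d1: "\<forall>u a b :: 'x. dist a b < d1 \<longrightarrow> dist (u + a) (u + b) < \<delta> / 2"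
    using uniformly_continuous_translation[OF compact_UNIV, of "\<delta> / 2"] \<open>\<delta> > 0\<close> by auto
  obtain d2 where "d2 > 0" and d2: "\<forall>u a b :: 'x. dist a b < d2 \<longrightarrow> dist (u + a) (u + b) < d1"
    using uniformly_continuous_translation[OF compact_UNIV \<open>d1 > 0\<close>] by blast
  define e0 where "e0 = min (min d2 (\<delta> / 2)) (1 / 2)"
  have "e0 > 0" and "e0 \<le> d2" and "e0 \<le> \<delta> / 2" and "e0 \<le> 1 / 2"
    using \<open>d2 > 0\<close> \<open>\<delta> > 0\<close> by (simp_all add: e0_def)
  then obtain N0 M0 where tracing: "periodic_tracing Y T dist P e0 N0 M0"
    using spec unfolding partial_specification_iff_periodic_tracing by blast
  define t where "t = M0 + 2"
  have "M0 + 2 \<le> t * n" using mult_le_mono2[OF \<open>1 \<le> n\<close>, of t] by (simp add: t_def)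
  obtain m where "m \<in> P" and m: "N0 + 2 * (t * n + 1) \<le> m" using unbounded by blast
  obtain zc where "zc \<in> Y" and zc: "(T ^^ (t * n)) zc = c"
    using \<open>c \<in> Y\<close> iter_image_Y by (metis imageE)
  \<comment> \<open>trace 0 at time 0 and a preimage of c at time t n by a single periodic orbit of Y\<close>
  define z :: "nat \<Rightarrow> 'x" where "z i = (if i = 0 then 0 else zc)" for i
  define s :: "nat \<Rightarrow> nat" where "s i = (if i = 0 then 0 else t * n)" for i
  have "(1 + e0) * real (t * n + 1) \<le> real m"
  proof -
    have "(1 + e0) * real (t * n + 1) \<le> 2 * real (t * n + 1)"
      using \<open>e0 \<le> 1 / 2\<close> by (intro mult_right_mono) auto
    then show ?thesis using m by linarith
  qed
  moreover have "z i \<in> Y \<and> s i < Suc (s i) \<and> Suc (s i) \<le> t * n + 1" if "i \<in> {0, 1}" for i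
    using that \<open>zc \<in> Y\<close> zero_in_Y by (auto simp: z_def s_def)
  moreover have "Suc (s i) + M0 < s i' \<or> Suc (s i') + M0 < s i"
    if "i \<in> {0, 1}" and "i' \<in> {0, 1}" and "i \<noteq> i'" for i i' :: nat
    using that \<open>M0 + 2 \<le> t * n\<close> by (auto simp: s_def)
  ultimately obtain w where "w \<in> Y"
    and traced: "\<forall>i\<in>{0, 1}. traces_segment T dist e0 (z i) (s i) (Suc (s i)) w"
    using periodic_tracing_family[OF tracing, of "{0, 1}" z s "\<lambda>i. Suc (s i)" "t * n + 1" m]
      \<open>e0 > 0\<close> \<open>m \<in> P\<close> m by auto
  have "dist 0 w < e0"
    using traces_segment_single_time[of T dist e0 "z 0" "s 0" w] traced \<open>e0 \<le> 1 / 2\<close>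
    by (simp add: z_def s_def)
  have "dist c ((T ^^ (t * n)) w) < e0"
    using traces_segment_single_time[of T dist e0 "z 1" "s 1" w] traced \<open>e0 \<le> 1 / 2\<close> zc
    by (simp add: z_def s_def)
  obtain v where "v \<in> Y" and v: "(T ^^ (t * n)) w - w = (T ^^ n) v - v"
    using iter_mult_sub_coboundary[OF \<open>w \<in> Y\<close>] by blast
  let ?g = "(T ^^ (t * n)) w"
  have "dist (- w + 0) (- w + w) < d1"
    using d2[rule_format, of 0 w "- w"] \<open>dist 0 w < e0\<close> \<open>e0 \<le> d2\<close> by simp
  then have "dist (?g + - w) (?g + 0) < \<delta> / 2" using d1[rule_format, of "- w" 0 ?g] by simp
  then have "dist (?g - w) c < \<delta>"
    using dist_triangle[of "?g - w" c ?g] \<open>dist c ?g < e0\<close> \<open>e0 \<le> \<delta> / 2\<close> by (simp add: dist_commute)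
  then show ?thesis using \<open>v \<in> Y\<close> v by auto
qed

lemma coboundary_surjective:
  assumes "partial_specification Y T dist P" and "\<And>m. \<exists>p\<in>P. m \<le> p" and "1 \<le> n" and "c \<in> Y"
  shows "\<exists>v\<in>Y. (T ^^ n) v - v = c"
proof -
  define H where "H = (\<lambda>v. (T ^^ n) v - v) ` Y"
  have "compact Y" using compact_UNIV closed_Y by (metis compact_Int_closed inf_top_left)
  moreover have "continuous_on Y (\<lambda>v. (T ^^ n) v - v)"
    using continuous_on_funpow[OF continuous_T, of n]
    by (intro continuous_on_diff continuous_on_id) (rule continuous_on_subset, auto)
  ultimately have "closed H" unfolding H_def by (intro compact_imp_closed compact_continuous_image)
  moreover have "c \<in> closure H"
    unfolding closure_approachable H_def using coboundary_approx[OF assms] by fast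
  ultimately have "c \<in> H" by (simp add: closure_closed)
  then show ?thesis unfolding H_def by auto
qed

lemma periodic_point_in_coset:
  assumes "partial_specification Y T dist P" and "\<And>m. \<exists>p\<in>P. m \<le> p" and "1 \<le> n"
    and "(T ^^ n) u - u \<in> Y"
  shows "\<exists>y\<in>Y. (T ^^ n) (u + y) = u + y"
proof -
  obtain y where "y \<in> Y" and y: "(T ^^ n) y - y = - ((T ^^ n) u - u)"
    using coboundary_surjective[OF assms(1-3) uminus_in_Y[OF assms(4)]] by blast
  then have "(T ^^ n) y = - ((T ^^ n) u - u) + y" by (simp add: diff_eq_eq)
  then have "(T ^^ n) (u + y) = u + y" by (simp add: iter_add)
  with \<open>y \<in> Y\<close> show ?thesis by blast
qed

lemma tracing_from_periodic_point:
  assumes trY: "periodic_tracing Y T dist P eY NY MY"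
    and "0 < eY" and "eY \<le> \<epsilon> / 3" and "e1 \<le> \<epsilon> / 3"
    and "MY < g" and "g < l" and "real g \<le> \<epsilon> / 3 * real l"
    and stable: "\<And>x u z v j0 j. j0 \<le> j \<Longrightarrow> j < j0 + l \<Longrightarrow>
      dist ((T ^^ j0) x) ((T ^^ j0) u + (T ^^ j0) z) < e1 \<Longrightarrow>
      dist ((T ^^ j) z) ((T ^^ j) v) < eY \<Longrightarrow> dist ((T ^^ j) x) ((T ^^ j) (u + v)) < \<epsilon>"
    and spec: "spaced_spec UNIV g r x a b"
    and n: "n \<in> P" "NY \<le> n" "(1 + \<epsilon>) * real (b (r - 1)) \<le> real n"
    and "(T ^^ n) u = u"
    and close: "\<And>i. i < r \<Longrightarrow> (1 - e1) * real (b i - a i) <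
      real (card {j \<in> {a i..<b i}. \<exists>y\<in>Y. dist ((T ^^ j) (x i)) ((T ^^ j) u + y) < e1})"
  shows "\<exists>w. (T ^^ n) w = w \<and> partially_traces T dist \<epsilon> r x a b w"
proof -
  define G where "G i j \<longleftrightarrow> (\<exists>y\<in>Y. dist ((T ^^ j) (x i)) ((T ^^ j) u + y) < e1)" for i j
  define s where "s p = block_start l (a (fst p)) (snd p)" for p :: "nat \<times> nat"
  define e where "e p = block_end l g (a (fst p)) (b (fst p)) (snd p)" for p :: "nat \<times> nat"
  define J where "J = {p. fst p < r \<and> snd p * l < b (fst p) - a (fst p)}"
  have "\<forall>p. \<exists>zp\<in>Y. \<exists>jp. \<forall>j\<in>{s p..<e p}. G (fst p) j \<longrightarrow>
      jp \<le> j \<and> jp \<in> {s p..<e p} \<and> dist ((T ^^ jp) (x (fst p))) ((T ^^ jp) u + (T ^^ jp) zp) < e1"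
    by (intro allI block_anchor) (simp add: G_def)
  then obtain z j0 where zY: "\<And>p. z p \<in> Y" and anchor: "\<And>p j. j \<in> {s p..<e p} \<Longrightarrow> G (fst p) j \<Longrightarrow>
      j0 p \<le> j \<and> j0 p \<in> {s p..<e p} \<and>
      dist ((T ^^ j0 p) (x (fst p))) ((T ^^ j0 p) u + (T ^^ j0 p) (z p)) < e1"
    by metis
  have r: "r \<ge> 1" and ab: "\<And>i. i < r \<Longrightarrow> a i < b i" using spec by (auto simp: spaced_spec_def)
  have blocks: "s p < e p \<and> e p \<le> b (r - 1) \<and> e p \<le> s p + l" if "p \<in> J" for p
    using that block_bounds[of "snd p" l "b (fst p)" "a (fst p)" g] \<open>g < l\<close>
      spaced_spec_end_le_last[OF spec, of "fst p"]
    by (auto simp: J_def s_def e_def)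
  have "finite J"
  proof (rule finite_subset)
    show "J \<subseteq> {..<r} \<times> {..<b (r - 1)}"
    proof
      fix p assume "p \<in> J"
      then have "snd p * l < b (fst p)" and "fst p < r" by (auto simp: J_def)
      moreover have "snd p \<le> snd p * l" using \<open>g < l\<close> by simp
      ultimately have "snd p < b (r - 1)"
        using spaced_spec_end_le_last[OF spec, of "fst p"] by linarith
      then show "p \<in> {..<r} \<times> {..<b (r - 1)}" using \<open>fst p < r\<close> by (simp add: mem_Times_iff)
    qed
  qed simp
  moreover have "(0, 0) \<in> J" using r ab by (simp add: J_def)
  then have "J \<noteq> {}" by blast
  moreover have "z p \<in> Y \<and> s p < e p \<and> e p \<le> b (r - 1)" if "p \<in> J" for p
    using zY blocks[OF that] by blast
  moreover have "e p + MY < s p' \<or> e p' + MY < s p" if "p \<in> J" and "p' \<in> J" and "p \<noteq> p'" for p p'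
    using spaced_spec_blocks_separated[OF spec \<open>g < l\<close>, of "fst p" "fst p'" "snd p" "snd p'"]
      that \<open>MY < g\<close> by (cases p, cases p') (auto simp: J_def s_def e_def)
  moreover have "(1 + eY) * real (b (r - 1)) \<le> real n"
  proof -
    have "(1 + eY) * real (b (r - 1)) \<le> (1 + \<epsilon>) * real (b (r - 1))"
      using \<open>eY \<le> \<epsilon> / 3\<close> \<open>0 < eY\<close> by (intro mult_right_mono) auto
    then show ?thesis using n(3) by linarith
  qed
  ultimately have "\<exists>wY\<in>Y. (T ^^ n) wY = wY \<and> (\<forall>p\<in>J. traces_segment T dist eY (z p) (s p) (e p) wY)"
    using \<open>0 < eY\<close> n(1,2) by (intro periodic_tracing_family[OF trY]) simp_all
  then obtain wY where "(T ^^ n) wY = wY"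
    and trY: "\<And>p. p \<in> J \<Longrightarrow> traces_segment T dist eY (z p) (s p) (e p) wY"
    by blast
  define w where "w = u + wY"
  have "traces_segment T dist \<epsilon> (x i) (a i) (b i) w" if "i < r" for i
    unfolding traces_segment_def
  proof (rule card_in_blocks_gt[where G = "G i" and \<alpha> = e1 and \<eta> = eY
        and Good = "\<lambda>q j. dist ((T ^^ j) (z (i, q))) ((T ^^ j) wY) < eY"])
    show "a i < b i" using ab that .
    show "(1 - e1) * real (b i - a i) < real (card {j \<in> {a i..<b i}. G i j})"
      using close[OF that] by (simp add: G_def)
    show "(1 - eY) * real (block_end l g (a i) (b i) q - block_start l (a i) q) <
        real (card {j \<in> {block_start l (a i) q..<block_end l g (a i) (b i) q}.
          dist ((T ^^ j) (z (i, q))) ((T ^^ j) wY) < eY})" if "q * l < b i - a i" for q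
      using trY[of "(i, q)"] that \<open>i < r\<close> by (simp add: traces_segment_def J_def s_def e_def)
    show "dist ((T ^^ j) (x i)) ((T ^^ j) w) < \<epsilon>"
      if "q * l < b i - a i" and "j \<in> {block_start l (a i) q..<block_end l g (a i) (b i) q}"
        and "G i j" and "dist ((T ^^ j) (z (i, q))) ((T ^^ j) wY) < eY" for q j
    proof -
      have "(i, q) \<in> J" using that(1) \<open>i < r\<close> by (simp add: J_def)
      have "j \<in> {s (i, q)..<e (i, q)}" using that(2) by (simp add: s_def e_def)
      note j0 = anchor[OF this, simplified, OF that(3)]
      have "j < j0 (i, q) + l" using j0 blocks[OF \<open>(i, q) \<in> J\<close>] \<open>j \<in> {s (i, q)..<e (i, q)}\<close> by auto
      then show ?thesis
        using stable[of "j0 (i, q)" j "x i" u "z (i, q)" wY] j0 that(4) unfolding w_def by blast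
    qed
  qed (use assms(2-7) in auto)
  moreover have "(T ^^ n) w = w" using \<open>(T ^^ n) u = u\<close> \<open>(T ^^ n) wY = wY\<close> by (simp add: w_def iter_add)
  ultimately show ?thesis unfolding partially_traces_iff by blast
qed

lemma periodic_point_shadowing_cosets:
  assumes trQ: "periodic_tracing (cosets Y) ((`) T) hausdorff_dist P e1 N1 M1"
    and "partial_specification Y T dist P" and "\<And>m. \<exists>p\<in>P. m \<le> p"
    and spec: "spaced_spec UNIV M1 r x a b"
    and n: "n \<in> P" "N1 \<le> n" "1 \<le> n" "(1 + e1) * real (b (r - 1)) \<le> real n"
  shows "\<exists>u. (T ^^ n) u = u \<and> (\<forall>i<r. (1 - e1) * real (b i - a i) <
    real (card {j \<in> {a i..<b i}. \<exists>y\<in>Y. dist ((T ^^ j) (x i)) ((T ^^ j) u + y) < e1}))"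
proof -
  have "spaced_spec (cosets Y) M1 r (\<lambda>i. (+) (x i) ` Y) a b"
    using spec by (rule spaced_spec_mono) (auto simp: cosets_def)
  from periodic_tracingD[OF trQ this n(1,2,4)] obtain C where "C \<in> cosets Y" and "((`) T ^^ n) C = C"
    and trC: "partially_traces ((`) T) hausdorff_dist e1 r (\<lambda>i. (+) (x i) ` Y) a b C"
    by blast
  then obtain u0 where C: "C = (+) u0 ` Y" unfolding cosets_def by blast
  have "(T ^^ n) ` C = C" using \<open>((`) T ^^ n) C = C\<close> by (simp add: funpow_image)
  moreover have "u0 \<in> C" unfolding C using zero_in_Y by (intro image_eqI[of _ _ 0]) simp_all
  ultimately have "(T ^^ n) u0 \<in> (+) u0 ` Y" using C by blast
  then have "(T ^^ n) u0 - u0 \<in> Y" by auto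
  then obtain y where "y \<in> Y" and periodic: "(T ^^ n) (u0 + y) = u0 + y"
    using periodic_point_in_coset[OF assms(2,3) n(3)] by blast
  define u where "u = u0 + y"
  have "(+) u ` Y = C" using coset_shift[OF \<open>y \<in> Y\<close>] C by (simp add: u_def)
  have close: "\<exists>y'\<in>Y. dist ((T ^^ j) (x i)) ((T ^^ j) u + y') < e1"
    if "hausdorff_dist (((`) T ^^ j) ((+) (x i) ` Y)) (((`) T ^^ j) C) < e1" for i j
  proof -
    have "((`) T ^^ j) C = (+) ((T ^^ j) u) ` Y"
      unfolding \<open>(+) u ` Y = C\<close>[symmetric] funpow_image by (rule iter_coset)
    moreover have "((`) T ^^ j) ((+) (x i) ` Y) = (+) ((T ^^ j) (x i)) ` Y"
      by (simp add: funpow_image iter_coset)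
    ultimately show ?thesis using that coset_hausdorff_close by simp
  qed
  have "(1 - e1) * real (b i - a i) <
      real (card {j \<in> {a i..<b i}. \<exists>y\<in>Y. dist ((T ^^ j) (x i)) ((T ^^ j) u + y) < e1})" if "i < r" for i
  proof -
    have "(1 - e1) * real (b i - a i) < real (card {j \<in> {a i..<b i}.
        hausdorff_dist (((`) T ^^ j) ((+) (x i) ` Y)) (((`) T ^^ j) C) < e1})"
      using trC that unfolding partially_traces_def by blast
    also have "\<dots> \<le> real (card {j \<in> {a i..<b i}. \<exists>y\<in>Y. dist ((T ^^ j) (x i)) ((T ^^ j) u + y) < e1})"
      using close by (intro of_nat_mono card_mono) auto
    finally show ?thesis .
  qed
  then show ?thesis using periodic unfolding u_def by blast
qed

lemma periodic_tracing_lift: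
  assumes PY: "partial_specification Y T dist P"
    and PQ: "partial_specification (cosets Y) ((`) T) hausdorff_dist P"
    and unbounded: "\<And>m. \<exists>p\<in>P. m \<le> p" and "\<epsilon> > 0"
  shows "\<exists>N M. periodic_tracing UNIV T dist P \<epsilon> N M"
proof -
  obtain \<rho> where "\<rho> > 0" and stability: "\<And>l. \<exists>\<eta>>0. \<forall>x u z v j0 j. j0 \<le> j \<longrightarrow> j < j0 + l \<longrightarrow>
      dist ((T ^^ j0) x) ((T ^^ j0) u + (T ^^ j0) z) < \<eta> \<longrightarrow>
      dist ((T ^^ j) z) ((T ^^ j) v) < \<rho> \<longrightarrow> dist ((T ^^ j) x) ((T ^^ j) (u + v)) < \<epsilon>"
    using orbit_stability[OF \<open>\<epsilon> > 0\<close>] by blast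
  define eY where "eY = min (\<epsilon> / 3) \<rho>"
  have "eY > 0" and "eY \<le> \<epsilon> / 3" using \<open>\<epsilon> > 0\<close> \<open>\<rho> > 0\<close> by (simp_all add: eY_def)
  then obtain NY MY where trY: "periodic_tracing Y T dist P eY NY MY"
    using PY unfolding partial_specification_iff_periodic_tracing by blast
  define g where "g = Suc MY"
  have "MY < g" by (simp add: g_def)
  define l where "l = nat \<lceil>3 * real g / \<epsilon>\<rceil> + g + 1"
  have "g < l" by (simp add: l_def)
  have "real g \<le> \<epsilon> / 3 * real l"
  proof -
    have "3 * real g / \<epsilon> \<le> real l" unfolding l_def by linarith
    then show ?thesis using \<open>\<epsilon> > 0\<close> by (simp add: field_simps)
  qed
  obtain \<eta> where "\<eta> > 0" and \<eta>: "\<forall>x u z v j0 j. j0 \<le> j \<longrightarrow> j < j0 + l \<longrightarrow>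
      dist ((T ^^ j0) x) ((T ^^ j0) u + (T ^^ j0) z) < \<eta> \<longrightarrow>
      dist ((T ^^ j) z) ((T ^^ j) v) < \<rho> \<longrightarrow> dist ((T ^^ j) x) ((T ^^ j) (u + v)) < \<epsilon>"
    using stability by blast
  define e1 where "e1 = min (\<epsilon> / 3) \<eta>"
  have "e1 > 0" and "e1 \<le> \<epsilon> / 3" using \<open>\<epsilon> > 0\<close> \<open>\<eta> > 0\<close> by (simp_all add: e1_def)
  then obtain N1 M1 where trQ: "periodic_tracing (cosets Y) ((`) T) hausdorff_dist P e1 N1 M1"
    using PQ unfolding partial_specification_iff_periodic_tracing by blast
  have stable: "dist ((T ^^ j) x) ((T ^^ j) (u + v)) < \<epsilon>"
    if "j0 \<le> j" and "j < j0 + l" and "dist ((T ^^ j0) x) ((T ^^ j0) u + (T ^^ j0) z) < e1"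
      and "dist ((T ^^ j) z) ((T ^^ j) v) < eY" for x u z v j0 j
    using \<eta>[rule_format, of j0 j x u z v] that by (simp add: e1_def eY_def)
  have "periodic_tracing UNIV T dist P \<epsilon> (Suc (max N1 NY)) (max M1 g)"
    unfolding periodic_tracing_def
  proof (intro allI impI ballI; elim conjE)
    fix r n :: nat and x :: "nat \<Rightarrow> 'x" and a b :: "nat \<Rightarrow> nat"
    assume spec: "spaced_spec UNIV (max M1 g) r x a b" and "n \<in> P" and "Suc (max N1 NY) \<le> n"
      and bound: "(1 + \<epsilon>) * real (b (r - 1)) \<le> real n"
    have "(1 + e1) * real (b (r - 1)) \<le> real n"
    proof -
      have "(1 + e1) * real (b (r - 1)) \<le> (1 + \<epsilon>) * real (b (r - 1))"
        using \<open>e1 \<le> \<epsilon> / 3\<close> \<open>\<epsilon> > 0\<close> by (intro mult_right_mono) auto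
      then show ?thesis using bound by linarith
    qed
    moreover have "N1 \<le> n" and "1 \<le> n" using \<open>Suc (max N1 NY) \<le> n\<close> by simp_all
    ultimately obtain u where "(T ^^ n) u = u" and close: "\<forall>i<r. (1 - e1) * real (b i - a i) <
        real (card {j \<in> {a i..<b i}. \<exists>y\<in>Y. dist ((T ^^ j) (x i)) ((T ^^ j) u + y) < e1})"
      using periodic_point_shadowing_cosets[OF trQ PY unbounded
          spaced_spec_mono[OF spec max.cobounded1 UNIV_I] \<open>n \<in> P\<close>] by blast
    moreover have "NY \<le> n" using \<open>Suc (max N1 NY) \<le> n\<close> by simp
    ultimately have "\<exists>w. (T ^^ n) w = w \<and> partially_traces T dist \<epsilon> r x a b w"
      by (intro tracing_from_periodic_point[OF trY \<open>eY > 0\<close> \<open>eY \<le> \<epsilon> / 3\<close> \<open>e1 \<le> \<epsilon> / 3\<close> \<open>MY < g\<close>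
          \<open>g < l\<close> \<open>real g \<le> \<epsilon> / 3 * real l\<close> stable spaced_spec_mono[OF spec max.cobounded2 UNIV_I]
          \<open>n \<in> P\<close> \<open>NY \<le> n\<close> bound \<open>(T ^^ n) u = u\<close> close[rule_format]])
    then show "\<exists>w\<in>UNIV. (T ^^ n) w = w \<and> partially_traces T dist \<epsilon> r x a b w" by blast
  qed
  then show ?thesis by blast
qed

end

theorem proposition4p5:
  fixes T :: "'x::{topological_ab_group_add, metric_space} \<Rightarrow> 'x"
    and Y :: "'x set" and P :: "nat set"
  assumes "compact (UNIV :: 'x set)"
    and "bij T" and "\<forall>x y. T (x + y) = T x + T y" and "continuous_on UNIV T"
    and "closed Y" and "0 \<in> Y" and "\<forall>x\<in>Y. \<forall>y\<in>Y. x - y \<in> Y" and "T ` Y = Y"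
    and "bounded_gaps P"
    and "partial_specification Y T dist P"
    and "partial_specification (cosets Y) (\<lambda>C. T ` C) hausdorff_dist P"
  shows "partial_specification UNIV T dist P"
proof -
  interpret invariant_subgroup T Y
    using assms(1,3-8) by unfold_locales (simp_all add: Modules.additive_def)
  have "\<And>m. \<exists>p\<in>P. m \<le> p" using \<open>bounded_gaps P\<close> unfolding bounded_gaps_def by blast
  then show ?thesis
    unfolding partial_specification_iff_periodic_tracing
    using periodic_tracing_lift[OF assms(10,11)] by blast
qed

end
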